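(* Let $A_k>0$, $B_k>0$, $0<\alpha_k\le1$, let $e_k(n)=\frac{A_k}{n^{\alpha_k}+B_k}$, and for ${\bm{q}}\in\Delta_K$ and $N\ge1$ let $\bar e_k({\bm{q}})=\mathbb{E}_{n_k\sim\mathrm{Binom}(N,q_k)}[e_k(n_k)]$ and $f_k({\bm{q}})=\frac{A_k}{(q_kN)^{\alpha_k}+B_k}$. Then, when $Nq_k$ is large enough (i.e. $Nq_k\ge M$ for some threshold $M$ depending only on $A_k,B_k,\alpha_k$), $$|f_k({\bm{q}})-\bar e_k({\bm{q}})|\le\frac{320A_k}{B_k}\cdot\frac{1}{(Nq_k)^2}+\frac{\alpha_kA_k}{(Nq_k)^{\alpha_k+\frac14}}+\frac{\alpha_kA_k}{(Nq_k)^{\alpha_k+\frac12}}.$$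
   Context: $\Delta_K=\{{\bm{r}}\in\mathbb{R}^K:{\bm{r}}\ge0,\ \sum_kr_k=1\}$. $\bar e_k({\bm{q}})$ is the expected error on component $k$ of the power-law model when trained on $N$ i.i.d. samples from the mixture with proportions ${\bm{q}}$ (the count $n_k$ from component $k$ is $\mathrm{Binom}(N,q_k)$); $f_k$ is the "approximate subpopulation error function". *)

theory Defs
  imports "HOL-Probability.Probability"
begin

definition prob_simplex :: "nat \<Rightarrow> (nat \<Rightarrow> real) set" where
  "prob_simplex K = {r. (\<forall>k<K. 0 \<le> r k) \<and> (\<Sum>k<K. r k) = 1}"

text \<open>Power-law error as a function of the number of samples n (n^alpha with 0^alpha = 0).\<close>
definition pl_err :: "real \<Rightarrow> real \<Rightarrow> real \<Rightarrow> real \<Rightarrow> real" where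
  "pl_err A B \<alpha> x = A / (x powr \<alpha> + B)"

definition exp_err :: "real \<Rightarrow> real \<Rightarrow> real \<Rightarrow> nat \<Rightarrow> real \<Rightarrow> real" where
  "exp_err A B \<alpha> N p = measure_pmf.expectation (binomial_pmf N p) (\<lambda>n. pl_err A B \<alpha> (real n))"

definition approx_err :: "real \<Rightarrow> real \<Rightarrow> real \<Rightarrow> nat \<Rightarrow> real \<Rightarrow> real" where
  "approx_err A B \<alpha> N p = pl_err A B \<alpha> (p * real N)"

end

theory Submission
  imports Defs "HOL-Real_Asymp.Real_Asymp"
begin

(* Write m = N q_k and g = pl_err A B alpha, so that f_k = g m and the expected error is E g(n)
   with n ~ Binom(N, q_k) of mean m.  Since x^alpha is concave and y |-> A/(y + B) is convex and
   decreasing, g lies above its tangent line at m; Jensen's inequality gives g m <= E g(n).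
   For the other direction split at s = m - m^(3/4)/2: on n >= s we have g n <= g s, and
   g s - g m = O(m^(-alpha-1/4)) by the tangent bound for x^alpha; the event n < s is handled by
   the Chernoff bound with lambda = m^(-1/4)/2, which gives exp(-sqrt m / 8) and hence O(1/m^2)
   once m is large. *)

lemma powr_le_tangent:
  fixes m x \<alpha> :: real
  assumes m: "0 < m" and x: "0 \<le> x" and \<alpha>: "0 < \<alpha>" "\<alpha> \<le> 1"
  shows "x powr \<alpha> \<le> m powr \<alpha> + \<alpha> * m powr (\<alpha> - 1) * (x - m)"
proof -
  have mm: "m powr (\<alpha> - 1) * m = m powr \<alpha>"
    using m by (simp add: powr_diff)
  show ?thesis
  proof (cases "x = 0")
    case True
    have "0 \<le> (1 - \<alpha>) * m powr \<alpha>" using \<alpha> by simp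
    also have "\<dots> = m powr \<alpha> + \<alpha> * m powr (\<alpha> - 1) * (x - m)"
      using True mm by (simp add: algebra_simps)
    finally show ?thesis using True \<alpha> by simp
  next
    case False
    have young: "x powr \<alpha> * m powr (1 - \<alpha>) \<le> \<alpha> * x + (1 - \<alpha>) * m"
      using Youngs_inequality_0[of \<alpha> "1 - \<alpha>" x m] \<alpha> False x m by simp
    have "x powr \<alpha> = (x powr \<alpha> * m powr (1 - \<alpha>)) * m powr (\<alpha> - 1)"
      using m by (simp add: powr_add[symmetric])
    also have "\<dots> \<le> (\<alpha> * x + (1 - \<alpha>) * m) * m powr (\<alpha> - 1)"
      using young by (intro mult_right_mono) auto
    also have "\<dots> = m powr \<alpha> + \<alpha> * m powr (\<alpha> - 1) * (x - m)"
      using mm by (simp add: algebra_simps)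
    finally show ?thesis .
  qed
qed

lemma inverse_ge_tangent:
  fixes a b :: real
  assumes a: "0 < a" and b: "0 < b"
  shows "1 / b - (a - b) / b\<^sup>2 \<le> 1 / a"
proof -
  have "1 / a - (1 / b - (a - b) / b\<^sup>2) = (a - b)\<^sup>2 / (a * b\<^sup>2)"
    using a b by (simp add: field_simps power2_eq_square)
  also have "\<dots> \<ge> 0" using a by simp
  finally show ?thesis by simp
qed

lemma pl_err_ge_tangent:
  fixes A B \<alpha> m x :: real
  assumes A: "0 \<le> A" and B: "0 < B" and m: "0 < m" and x: "0 \<le> x" and \<alpha>: "0 < \<alpha>" "\<alpha> \<le> 1"
  shows "pl_err A B \<alpha> m - A * \<alpha> * m powr (\<alpha> - 1) / (m powr \<alpha> + B)\<^sup>2 * (x - m)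
           \<le> pl_err A B \<alpha> x"
proof -
  let ?D = "\<alpha> * m powr (\<alpha> - 1) * (x - m)"
  have pos: "0 < x powr \<alpha> + B" "0 < m powr \<alpha> + B" using B by (auto intro: add_nonneg_pos)
  have "1 / (m powr \<alpha> + B) - ?D / (m powr \<alpha> + B)\<^sup>2
          \<le> 1 / (m powr \<alpha> + B) - (x powr \<alpha> - m powr \<alpha>) / (m powr \<alpha> + B)\<^sup>2"
    using powr_le_tangent[OF m x \<alpha>] by (intro diff_left_mono divide_right_mono) auto
  also have "\<dots> \<le> 1 / (x powr \<alpha> + B)"
    using inverse_ge_tangent[OF pos] unfolding add_diff_cancel_right .
  finally have "A * (1 / (m powr \<alpha> + B) - ?D / (m powr \<alpha> + B)\<^sup>2) \<le> A * (1 / (x powr \<alpha> + B))"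
    using A by (rule mult_left_mono)
  then show ?thesis
    unfolding pl_err_def by (simp add: algebra_simps)
qed

lemma pl_err_nonneg: "0 \<le> A \<Longrightarrow> 0 < B \<Longrightarrow> 0 \<le> pl_err A B \<alpha> x"
  unfolding pl_err_def by (auto intro: add_nonneg_pos)

lemma pl_err_le: "0 \<le> A \<Longrightarrow> 0 < B \<Longrightarrow> pl_err A B \<alpha> x \<le> A / B"
  unfolding pl_err_def by (auto intro!: frac_le)

lemma pl_err_antimono:
  assumes "0 \<le> A" "0 < B" "0 < \<alpha>" "0 \<le> x" "x \<le> y"
  shows "pl_err A B \<alpha> y \<le> pl_err A B \<alpha> x"
  unfolding pl_err_def using assms by (auto intro!: frac_le add_nonneg_pos powr_mono2)

lemma pl_err_diff_le:
  fixes A B \<alpha> s m :: real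
  assumes A: "0 \<le> A" and B: "0 < B" and \<alpha>: "0 < \<alpha>" "\<alpha> \<le> 1" and s: "0 < s" "s \<le> m"
  shows "pl_err A B \<alpha> s - pl_err A B \<alpha> m \<le> \<alpha> * A * (m - s) / (s * m powr \<alpha>)"
proof -
  define a where "a = s powr \<alpha>"
  define b where "b = m powr \<alpha>"
  have a: "0 < a" and b: "0 < b" unfolding a_def b_def using s by auto
  have "b \<le> a + \<alpha> * s powr (\<alpha> - 1) * (m - s)"
    using powr_le_tangent[of s m \<alpha>] s \<alpha> unfolding a_def b_def by simp
  also have "s powr (\<alpha> - 1) = a / s"
    unfolding a_def using s by (simp add: powr_diff)
  finally have ba: "b - a \<le> \<alpha> * a * (m - s) / s" by simp
  have ab: "a \<le> b" unfolding a_def b_def using s \<alpha> by (intro powr_mono2) auto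
  have "pl_err A B \<alpha> s - pl_err A B \<alpha> m = A * (b - a) / ((a + B) * (b + B))"
    unfolding pl_err_def a_def[symmetric] b_def[symmetric] using a b B by (simp add: field_simps)
  also have "\<dots> \<le> A * (b - a) / (a * b)"
    using a b B A ab by (intro divide_left_mono mult_mono mult_nonneg_nonneg mult_pos_pos) auto
  also have "\<dots> \<le> A * (\<alpha> * a * (m - s) / s) / (a * b)"
    using ba A a b by (intro divide_right_mono mult_left_mono) auto
  also have "\<dots> = \<alpha> * A * (m - s) / (s * m powr \<alpha>)"
    unfolding b_def using a s by (simp add: field_simps)
  finally show ?thesis .
qed

lemma pl_err_le_split:
  fixes A B \<alpha> l s x :: real
  assumes A: "0 \<le> A" and B: "0 < B" and \<alpha>: "0 < \<alpha>" and s: "0 \<le> s" and l: "0 \<le> l"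
  shows "pl_err A B \<alpha> x \<le> pl_err A B \<alpha> s + A / B * exp (l * (s - x))"
proof (cases "s \<le> x")
  case True
  moreover have "0 \<le> A / B * exp (l * (s - x))" using A B by simp
  ultimately show ?thesis
    using pl_err_antimono[OF A B \<alpha> s True] by linarith
next
  case False
  have "A / B * 1 \<le> A / B * exp (l * (s - x))"
    using False l A B by (intro mult_left_mono) auto
  then show ?thesis
    using pl_err_le[OF A B, of \<alpha> x] pl_err_nonneg[OF A B, of \<alpha> s] by simp
qed

lemma binomial_mean_sum:
  fixes p :: real
  shows "(\<Sum>k\<le>n. (real (n choose k) * p ^ k * (1 - p) ^ (n - k)) * real k) = real n * p"
proof (cases n)
  case 0
  then show ?thesis by simp
next
  case (Suc j)
  have "(\<Sum>k\<le>Suc j. (real (Suc j choose k) * p ^ k * (1 - p) ^ (Suc j - k)) * real k)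
      = (\<Sum>k\<le>j. (real (Suc j choose Suc k) * p ^ Suc k * (1 - p) ^ (j - k)) * real (Suc k))"
    by (subst sum.atMost_Suc_shift) simp
  also have "\<dots> = (\<Sum>k\<le>j. real (Suc j) * p * (real (j choose k) * p ^ k * (1 - p) ^ (j - k)))"
  proof (rule sum.cong[OF refl])
    fix k
    have choose: "real (Suc k) * real (Suc j choose Suc k) = real (Suc j) * real (j choose k)"
      using Suc_times_binomial[of k j] by (metis of_nat_mult)
    have "(real (Suc j choose Suc k) * p ^ Suc k * (1 - p) ^ (j - k)) * real (Suc k)
          = (real (Suc k) * real (Suc j choose Suc k)) * (p * (p ^ k * (1 - p) ^ (j - k)))"
      by (simp add: mult_ac)
    also have "\<dots> = real (Suc j) * p * (real (j choose k) * p ^ k * (1 - p) ^ (j - k))"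
      unfolding choose by (simp add: mult_ac)
    finally show "(real (Suc j choose Suc k) * p ^ Suc k * (1 - p) ^ (j - k)) * real (Suc k)
         = real (Suc j) * p * (real (j choose k) * p ^ k * (1 - p) ^ (j - k))" .
  qed
  also have "\<dots> = real (Suc j) * p * (p + (1 - p)) ^ j"
    unfolding binomial_ring by (rule sum_distrib_left[symmetric])
  finally show ?thesis using Suc by simp
qed

lemma expectation_binomial_pmf_real:
  assumes "p \<in> {0..1}"
  shows "measure_pmf.expectation (binomial_pmf n p) real = real n * p"
  using expectation_binomial_pmf'[OF assms, of n real] binomial_mean_sum[of n p] by simp

lemma expectation_binomial_pmf_power:
  fixes z :: real
  assumes "p \<in> {0..1}"
  shows "measure_pmf.expectation (binomial_pmf n p) (\<lambda>k. z ^ k) = (p * z + (1 - p)) ^ n"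
  using expectation_binomial_pmf'[OF assms, of n "\<lambda>k. z ^ k"]
  by (simp add: binomial_ring power_mult_distrib mult_ac)

lemma binomial_pgf_le_exp:
  fixes p z :: real
  assumes p: "p \<in> {0..1}" and z: "0 \<le> z"
  shows "(p * z + (1 - p)) ^ n \<le> exp (real n * p * (z - 1))"
proof -
  have "p * z + (1 - p) \<le> exp (p * (z - 1))"
    using exp_ge_add_one_self[of "p * (z - 1)"] by (simp add: algebra_simps)
  moreover have "0 \<le> p * z + (1 - p)" using p z by simp
  ultimately have "(p * z + (1 - p)) ^ n \<le> exp (p * (z - 1)) ^ n"
    by (rule power_mono)
  then show ?thesis
    by (simp add: exp_of_nat_mult[symmetric] mult.assoc)
qed

lemma exp_neg_le_quadratic:
  fixes l :: real
  assumes "0 \<le> l"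
  shows "exp (- l) \<le> 1 - l + l\<^sup>2 / 2"
proof -
  define P where "P = 1 + l + l\<^sup>2 / 2"
  have P: "0 < P" "P \<le> exp l"
    unfolding P_def using assms exp_lower_Taylor_quadratic by (auto intro: add_pos_nonneg)
  have "P * (1 - l + l\<^sup>2 / 2) = 1 + l ^ 4 / 4"
    unfolding P_def by (simp add: field_simps power2_eq_square power4_eq_xxxx)
  then have "1 \<le> P * (1 - l + l\<^sup>2 / 2)" by simp
  then have "1 / P \<le> 1 - l + l\<^sup>2 / 2"
    using P by (simp add: divide_simps mult.commute)
  moreover have "exp (- l) \<le> 1 / P"
    using P by (simp add: exp_minus divide_simps)
  ultimately show ?thesis by linarith
qed

lemma approx_err_le_exp_err:
  fixes A B \<alpha> p :: real
  assumes A: "0 \<le> A" and B: "0 < B" and \<alpha>: "0 < \<alpha>" "\<alpha> \<le> 1"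
    and p: "p \<in> {0..1}" and m: "0 < real N * p"
  shows "approx_err A B \<alpha> N p \<le> exp_err A B \<alpha> N p"
proof -
  define m where "m = real N * p"
  define c where "c = A * \<alpha> * m powr (\<alpha> - 1) / (m powr \<alpha> + B)\<^sup>2"
  have "pl_err A B \<alpha> m
        = measure_pmf.expectation (binomial_pmf N p) (\<lambda>n. pl_err A B \<alpha> m - c * (real n - m))"
    using p expectation_binomial_pmf_real[OF p, of N]
    by (simp add: m_def algebra_simps Bochner_Integration.integral_diff)
  also have "\<dots> \<le> exp_err A B \<alpha> N p"
    unfolding exp_err_def using p pl_err_ge_tangent[OF A B m[folded m_def] _ \<alpha>]
    by (intro integral_mono) (auto simp: c_def)
  finally show ?thesis
    by (simp add: approx_err_def m_def mult.commute)
qed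

lemma exp_err_le_chernoff:
  fixes A B \<alpha> p l s :: real
  assumes A: "0 \<le> A" and B: "0 < B" and \<alpha>: "0 < \<alpha>"
    and p: "p \<in> {0..1}" and s: "0 \<le> s" and l: "0 \<le> l"
  shows "exp_err A B \<alpha> N p
           \<le> pl_err A B \<alpha> s + A / B * exp (l * s + real N * p * (- l + l\<^sup>2 / 2))"
proof -
  have "exp_err A B \<alpha> N p
        \<le> measure_pmf.expectation (binomial_pmf N p)
            (\<lambda>n. pl_err A B \<alpha> s + A / B * exp (l * s) * exp (- l) ^ n)"
    unfolding exp_err_def
  proof (intro integral_mono)
    fix n :: nat
    have "exp (l * s) * exp (- l) ^ n = exp (l * (s - real n))"
      by (simp add: exp_of_nat_mult[symmetric] mult_exp_exp algebra_simps)
    then show "pl_err A B \<alpha> (real n) \<le> pl_err A B \<alpha> s + A / B * exp (l * s) * exp (- l) ^ n"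
      using pl_err_le_split[OF A B \<alpha> s l, of "real n"] by (simp add: mult.assoc)
  qed (use p in auto)
  also have "\<dots> = pl_err A B \<alpha> s + A / B * exp (l * s) * (p * exp (- l) + (1 - p)) ^ N"
    using p expectation_binomial_pmf_power[OF p, of N "exp (- l)"]
    by (simp add: Bochner_Integration.integral_add)
  also have "\<dots> \<le> pl_err A B \<alpha> s + A / B * exp (l * s) * exp (real N * p * (- l + l\<^sup>2 / 2))"
  proof -
    have "(p * exp (- l) + (1 - p)) ^ N \<le> exp (real N * p * (exp (- l) - 1))"
      using binomial_pgf_le_exp[OF p] by simp
    also have "\<dots> \<le> exp (real N * p * (- l + l\<^sup>2 / 2))"
      using exp_neg_le_quadratic[OF l] p by (auto intro!: mult_left_mono)
    finally show ?thesis
      using A B by (intro add_left_mono mult_left_mono) auto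
  qed
  finally show ?thesis
    by (simp add: mult.assoc exp_add)
qed

lemma pl_err_shift_le:
  fixes A B \<alpha> r :: real
  assumes A: "0 \<le> A" and B: "0 < B" and \<alpha>: "0 < \<alpha>" "\<alpha> \<le> 1" and r: "1 \<le> r"
  shows "pl_err A B \<alpha> (r ^ 4 - r ^ 3 / 2) - pl_err A B \<alpha> (r ^ 4) \<le> \<alpha> * A / (r * (r ^ 4) powr \<alpha>)"
proof -
  have r34: "r ^ 3 \<le> r ^ 4" using r by (simp add: power_increasing)
  then have half: "r ^ 4 / 2 \<le> r ^ 4 - r ^ 3 / 2" by simp
  have "0 < r ^ 3" using r by simp
  then have pos: "0 < r ^ 4 / 2" "r ^ 3 < r ^ 4 * 2" using r34 by linarith+
  have "pl_err A B \<alpha> (r ^ 4 - r ^ 3 / 2) - pl_err A B \<alpha> (r ^ 4)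
        \<le> \<alpha> * A * (r ^ 3 / 2) / ((r ^ 4 - r ^ 3 / 2) * (r ^ 4) powr \<alpha>)"
    using pl_err_diff_le[OF A B \<alpha>, of "r ^ 4 - r ^ 3 / 2" "r ^ 4"] half pos r by simp
  also have "\<dots> \<le> \<alpha> * A * (r ^ 3 / 2) / (r ^ 4 / 2 * (r ^ 4) powr \<alpha>)"
    using half pos A \<alpha> r by (intro divide_left_mono mult_right_mono mult_pos_pos) auto
  also have "\<dots> = \<alpha> * A / (r * (r ^ 4) powr \<alpha>)"
    using r by (simp add: field_simps power_numeral_reduce)
  finally show ?thesis .
qed

lemma exp_err_le_quartic_split:
  fixes A B \<alpha> p r :: real
  assumes A: "0 \<le> A" and B: "0 < B" and \<alpha>: "0 < \<alpha>" and p: "p \<in> {0..1}"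
    and r: "1 \<le> r" and r4: "r ^ 4 = real N * p"
  shows "exp_err A B \<alpha> N p \<le> pl_err A B \<alpha> (r ^ 4 - r ^ 3 / 2) + A / B * exp (- r\<^sup>2 / 8)"
proof -
  define s where "s = r ^ 4 - r ^ 3 / 2"
  define l where "l = 1 / (2 * r)"
  have "r ^ 3 \<le> r ^ 4" "0 \<le> r ^ 3" using r by (simp_all add: power_increasing)
  then have s: "0 \<le> s" unfolding s_def by linarith
  have l: "0 \<le> l" unfolding l_def using r by simp
  have exponent: "l * s + real N * p * (- l + l\<^sup>2 / 2) = - r\<^sup>2 / 8"
    unfolding l_def s_def r4[symmetric] using r
    by (simp add: field_simps) (simp add: power2_eq_square power_numeral_reduce)
  have "exp_err A B \<alpha> N p \<le> pl_err A B \<alpha> s + A / B * exp (- r\<^sup>2 / 8)"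
    using exp_err_le_chernoff[where N = N, OF A B \<alpha> p s l] unfolding exponent .
  then show ?thesis
    unfolding s_def .
qed

lemma approx_err_exp_err_diff_le:
  fixes A B \<alpha> p :: real
  assumes A: "0 \<le> A" and B: "0 < B" and \<alpha>: "0 < \<alpha>" "\<alpha> \<le> 1" and p: "p \<in> {0..1}"
    and m1: "1 \<le> real N * p"
    and large: "(real N * p)\<^sup>2 * exp (- sqrt (real N * p) / 8) \<le> 320"
  shows "\<bar>approx_err A B \<alpha> N p - exp_err A B \<alpha> N p\<bar>
           \<le> 320 * A / B * (1 / (real N * p)\<^sup>2) + \<alpha> * A / (real N * p) powr (\<alpha> + 1/4)"
proof -
  define m where "m = real N * p"
  define r where "r = m powr (1/4)"
  define s where "s = r ^ 4 - r ^ 3 / 2"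
  have m: "0 < m" using m1 by (simp add: m_def)
  have r4: "r ^ 4 = m" unfolding r_def using m by (simp add: powr_power)
  have "r\<^sup>2 = m powr (1/4 * 2)" unfolding r_def using m by (simp add: powr_powr flip: powr_realpow)
  then have r2: "r\<^sup>2 = sqrt m" using m by (simp add: powr_half_sqrt)
  have r: "1 \<le> r" unfolding r_def using m1 by (simp add: m_def ge_one_powr_ge_zero)
  have chernoff: "exp_err A B \<alpha> N p \<le> pl_err A B \<alpha> s + A / B * exp (- sqrt m / 8)"
    using exp_err_le_quartic_split[OF A B \<alpha>(1) p r] r4 unfolding s_def r2 m_def by simp
  have "exp (- sqrt m / 8) \<le> 320 / m\<^sup>2"
    using large m unfolding m_def[symmetric] by (simp add: pos_le_divide_eq mult.commute)
  then have "A / B * exp (- sqrt m / 8) \<le> A / B * (320 / m\<^sup>2)"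
    using A B by (intro mult_left_mono) auto
  then have tail: "A / B * exp (- sqrt m / 8) \<le> 320 * A / B * (1 / m\<^sup>2)"
    by (simp add: mult.commute)
  have "r * m powr \<alpha> = m powr (\<alpha> + 1/4)"
    unfolding r_def by (simp add: powr_add)
  then have shift: "pl_err A B \<alpha> s - pl_err A B \<alpha> m \<le> \<alpha> * A / m powr (\<alpha> + 1/4)"
    using pl_err_shift_le[OF A B \<alpha> r] by (simp add: s_def r4)
  have jensen: "approx_err A B \<alpha> N p \<le> exp_err A B \<alpha> N p"
    using approx_err_le_exp_err[OF A B \<alpha> p] m by (simp add: m_def)
  have "approx_err A B \<alpha> N p = pl_err A B \<alpha> m"
    by (simp add: approx_err_def m_def mult.commute)
  with chernoff tail shift jensen show ?thesis
    unfolding m_def[symmetric] by linarith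
qed

lemma prob_simplex_range:
  assumes "q \<in> prob_simplex K" "k < K"
  shows "q k \<in> {0..1}"
proof -
  have "q k \<le> (\<Sum>i<K. q i)"
    using assms by (intro member_le_sum) (auto simp: prob_simplex_def)
  then show ?thesis
    using assms by (auto simp: prob_simplex_def)
qed

theorem propositionA2:
  fixes A B \<alpha> :: real
  assumes "A > 0" and "B > 0" and "0 < \<alpha>" and "\<alpha> \<le> 1"
  shows "\<exists>M. \<forall>(K::nat) (N::nat) (q::nat \<Rightarrow> real) (k::nat).
           q \<in> prob_simplex K \<longrightarrow> k < K \<longrightarrow> N \<ge> 1 \<longrightarrow> real N * q k \<ge> M \<longrightarrow>
           \<bar>approx_err A B \<alpha> N (q k) - exp_err A B \<alpha> N (q k)\<bar>
             \<le> 320 * A / B * (1 / (real N * q k) ^ 2)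
               + \<alpha> * A / (real N * q k) powr (\<alpha> + 1/4)
               + \<alpha> * A / (real N * q k) powr (\<alpha> + 1/2)"
proof -
  have "eventually (\<lambda>m::real. m\<^sup>2 * exp (- sqrt m / 8) \<le> 320) at_top"
    by real_asymp
  then obtain M0 where M0: "\<And>m. m \<ge> M0 \<Longrightarrow> m\<^sup>2 * exp (- sqrt m / 8) \<le> 320"
    by (auto simp: eventually_at_top_linorder)
  show ?thesis
  proof (intro exI[of _ "max 1 M0"] allI impI)
    fix K N q k
    assume q: "q \<in> prob_simplex K" "k < K" and large: "real N * q k \<ge> max 1 M0"
    have "\<bar>approx_err A B \<alpha> N (q k) - exp_err A B \<alpha> N (q k)\<bar>
          \<le> 320 * A / B * (1 / (real N * q k)\<^sup>2) + \<alpha> * A / (real N * q k) powr (\<alpha> + 1/4)"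
    proof (rule approx_err_exp_err_diff_le)
      show "q k \<in> {0..1}" using q by (rule prob_simplex_range)
      show "1 \<le> real N * q k" "(real N * q k)\<^sup>2 * exp (- sqrt (real N * q k) / 8) \<le> 320"
        using large M0 by auto
    qed (use assms in auto)
    moreover have "0 \<le> \<alpha> * A / (real N * q k) powr (\<alpha> + 1/2)"
      using assms by simp
    ultimately show "\<bar>approx_err A B \<alpha> N (q k) - exp_err A B \<alpha> N (q k)\<bar>
             \<le> 320 * A / B * (1 / (real N * q k) ^ 2)
               + \<alpha> * A / (real N * q k) powr (\<alpha> + 1/4)
               + \<alpha> * A / (real N * q k) powr (\<alpha> + 1/2)"
      by linarith
  qed
qed

end
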